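(* For real numbers $y,z$ let $h_{y,z}(u):=uy+(1-u)z+2u\ln u+2(1-u)\ln(1-u)+1$ for $u\in(0,1)$, and let $U$ be uniform on $(0,1)$. Then for all real $t$ (with $t\neq 0$), $\left|\mathbf{E}e^{ith_{y,z}(U)}\right|\le 2|t|^{-1/2}$. *)

theory Defs
  imports "HOL-Probability.Probability"
begin

definition h_fun :: "real \<Rightarrow> real \<Rightarrow> real \<Rightarrow> real" where
  "h_fun y z u = u * y + (1 - u) * z + 2 * u * ln u + 2 * (1 - u) * ln (1 - u) + 1"

definition unif01 :: "real measure" where
  "unif01 = uniform_measure lborel {0<..<1}"

end

theory Submission
  imports Defs
begin

(* Write \<phi> = s h_{y,z} with s > 0 (negative t reduces to this by complex conjugation). Then
   \<phi>'(u) = s (y - z + 2 ln (u / (1 - u))) increases from -\<infinity> to \<infinity>, and \<phi>''(u) = s (2/u + 2/(1-u)) \<ge> 8 s.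
   Van der Corput's first-derivative test (integrate by parts against 1/\<phi>') bounds the integral of
   e^{i\<phi>} by 2/\<delta> on each of the two intervals where |\<phi>'| \<ge> \<delta>; the interval in between, where
   |\<phi>'| < \<delta>, has length at most 2\<delta>/(8s). With \<delta> = 4 \<surd>s the three pieces contribute
   1/(2\<surd>s) + 1/\<surd>s + 1/(2\<surd>s). *)

lemma integral_split_three:
  fixes f :: "real \<Rightarrow> 'a::banach"
  assumes "f integrable_on {a..b}" "a \<le> c" "c \<le> d" "d \<le> b"
  shows "integral {a..b} f = integral {a..c} f + integral {c..d} f + integral {d..b} f"
  using assms
  by (metis integrable_subinterval_real Henstock_Kurzweil_Integration.integral_combine
      atLeastatMost_subset_iff order.trans order.refl)

lemma norm_integral_cis_le_length:
  assumes "(\<lambda>u. cis (\<phi> u)) integrable_on {c..d}" "c \<le> d"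
  shows "cmod (integral {c..d} (\<lambda>u. cis (\<phi> u))) \<le> d - c"
  using has_integral_bound[of 1 "\<lambda>u. cis (\<phi> u)" _ c d] assms
  by (simp add: has_integral_integral)

lemma has_vector_derivative_cis_div_derivative:
  fixes \<phi> g :: "real \<Rightarrow> real"
  assumes \<phi>: "(\<phi> has_real_derivative g u) (at u within S)"
    and g: "(g has_real_derivative g' u) (at u within S)" and "g u \<noteq> 0"
  shows "((\<lambda>v. - \<i> * cis (\<phi> v) / of_real (g v)) has_vector_derivative
           cis (\<phi> u) + \<i> * cis (\<phi> u) * of_real (g' u / (g u)\<^sup>2)) (at u within S)"
proof -
  have "((\<lambda>v. cis (\<phi> v)) has_vector_derivative \<i> * of_real (g u) * cis (\<phi> u)) (at u within S)"
    using has_derivative_cis[OF \<phi>[unfolded has_field_derivative_def]]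
    by (simp add: has_vector_derivative_def scaleR_conv_of_real algebra_simps)
  moreover have "((\<lambda>v. of_real (inverse (g v)) :: complex) has_vector_derivative
      of_real (- (inverse (g u) * g' u * inverse (g u)))) (at u within S)"
    by (rule has_vector_derivative_of_real[OF DERIV_inverse'[OF g \<open>g u \<noteq> 0\<close>]])
  ultimately have "((\<lambda>v. - \<i> * (cis (\<phi> v) * of_real (inverse (g v)))) has_vector_derivative
      - \<i> * (cis (\<phi> u) * of_real (- (inverse (g u) * g' u * inverse (g u)))
        + \<i> * of_real (g u) * cis (\<phi> u) * of_real (inverse (g u)))) (at u within S)"
    by (intro has_vector_derivative_mult_right has_vector_derivative_mult)
  then show ?thesis
    using \<open>g u \<noteq> 0\<close> by (simp add: field_simps power2_eq_square flip: of_real_mult)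
qed

lemma norm_integral_cis_le_by_parts:
  fixes \<phi> g g' :: "real \<Rightarrow> real"
  assumes "a \<le> b"
    and \<phi>: "\<And>u. u \<in> {a..b} \<Longrightarrow> (\<phi> has_real_derivative g u) (at u within {a..b})"
    and g: "\<And>u. u \<in> {a..b} \<Longrightarrow> (g has_real_derivative g' u) (at u within {a..b})"
    and nonzero: "\<And>u. u \<in> {a..b} \<Longrightarrow> g u \<noteq> 0"
    and convex: "\<And>u. u \<in> {a..b} \<Longrightarrow> 0 \<le> g' u"
  shows "cmod (integral {a..b} (\<lambda>u. cis (\<phi> u))) \<le> 1 / \<bar>g a\<bar> + 1 / \<bar>g b\<bar> + (1 / g a - 1 / g b)"
proof -
  define F where "F v = - \<i> * cis (\<phi> v) / of_real (g v)" for v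
  define q where "q u = g' u / (g u)\<^sup>2" for u
  define R where "R u = \<i> * cis (\<phi> u) * of_real (q u)" for u
  have by_parts: "((\<lambda>u. cis (\<phi> u) + R u) has_integral F b - F a) {a..b}"
    unfolding F_def R_def q_def using \<open>a \<le> b\<close>
    by (intro fundamental_theorem_of_calculus has_vector_derivative_cis_div_derivative \<phi> g nonzero)
  moreover have q_int: "(q has_integral 1 / g a - 1 / g b) {a..b}"
  proof -
    have "((\<lambda>u. - inverse (g u)) has_real_derivative q u) (at u within {a..b})"
      if "u \<in> {a..b}" for u
      using g[OF that] nonzero[OF that]
      by (auto intro!: derivative_eq_intros simp: q_def field_simps power2_eq_square)
    from fundamental_theorem_of_calculus[OF \<open>a \<le> b\<close>, of "\<lambda>u. - inverse (g u)" q] this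
    show ?thesis by (simp add: has_real_derivative_iff_has_vector_derivative divide_inverse)
  qed
  moreover have cis_int: "(\<lambda>u. cis (\<phi> u)) integrable_on {a..b}"
    using \<phi>[THEN DERIV_continuous]
    by (intro integrable_continuous_interval continuous_intros)
      (simp add: continuous_on_eq_continuous_within)
  ultimately have R_int: "R integrable_on {a..b}"
    using integrable_diff[of "\<lambda>u. cis (\<phi> u) + R u" _ "\<lambda>u. cis (\<phi> u)"] by auto
  have split: "integral {a..b} (\<lambda>u. cis (\<phi> u)) = F b - F a - integral {a..b} R"
    using integral_add[OF cis_int R_int] integral_unique[OF by_parts]
    by (simp add: algebra_simps)
  have "cmod (integral {a..b} R) \<le> integral {a..b} q"
    using R_int q_int convex
    by (intro integral_norm_bound_integral) (auto simp: R_def q_def norm_mult norm_divide norm_power)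
  also have "\<dots> = 1 / g a - 1 / g b"
    using q_int by (rule integral_unique)
  finally have "cmod (integral {a..b} R) \<le> 1 / g a - 1 / g b" .
  moreover have "cmod (F v) = 1 / \<bar>g v\<bar>" for v
    by (simp add: F_def norm_divide norm_mult)
  ultimately show ?thesis
    unfolding split by (smt (verit) norm_triangle_ineq4)
qed

lemma van_der_Corput_Icc:
  fixes \<phi> g g' :: "real \<Rightarrow> real"
  assumes "a \<le> b" "0 < \<delta>"
    and \<phi>: "\<And>u. u \<in> {a..b} \<Longrightarrow> (\<phi> has_real_derivative g u) (at u within {a..b})"
    and g: "\<And>u. u \<in> {a..b} \<Longrightarrow> (g has_real_derivative g' u) (at u within {a..b})"
    and convex: "\<And>u. u \<in> {a..b} \<Longrightarrow> 0 \<le> g' u"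
    and large: "\<And>u. u \<in> {a..b} \<Longrightarrow> \<delta> \<le> \<bar>g u\<bar>"
  shows "cmod (integral {a..b} (\<lambda>u. cis (\<phi> u))) \<le> 2 / \<delta>"
proof -
  have "(g' has_integral g b - g a) {a..b}"
    using \<open>a \<le> b\<close> g[unfolded has_real_derivative_iff_has_vector_derivative]
    by (rule fundamental_theorem_of_calculus)
  then have "0 \<le> g b - g a"
    by (rule has_integral_nonneg) (use convex in auto)
  moreover have "1 / \<bar>g a\<bar> \<le> 1 / \<delta>" "1 / \<bar>g b\<bar> \<le> 1 / \<delta>"
    using large \<open>a \<le> b\<close> \<open>0 < \<delta>\<close> by (auto intro: frac_le)
  ultimately have "1 / \<bar>g a\<bar> + 1 / \<bar>g b\<bar> + (1 / g a - 1 / g b) \<le> 2 / \<delta>"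
    using \<open>0 < \<delta>\<close> by (cases "0 < g a"; cases "0 < g b") (auto simp: abs_if)
  moreover have nonzero: "g u \<noteq> 0" if "u \<in> {a..b}" for u
    using large[OF that] \<open>0 < \<delta>\<close> by auto
  ultimately show ?thesis
    using norm_integral_cis_le_by_parts[OF \<open>a \<le> b\<close> \<phi> g nonzero convex] by linarith
qed

(* Hypotheses on the open interval only, since in the application \<phi>' is unbounded at both endpoints. *)
lemma van_der_Corput:
  fixes \<phi> g g' :: "real \<Rightarrow> real"
  assumes integrable: "(\<lambda>u. cis (\<phi> u)) integrable_on {a..b}" and "0 < \<delta>"
    and \<phi>: "\<And>u. u \<in> {a<..<b} \<Longrightarrow> (\<phi> has_real_derivative g u) (at u)"
    and g: "\<And>u. u \<in> {a<..<b} \<Longrightarrow> (g has_real_derivative g' u) (at u)"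
    and convex: "\<And>u. u \<in> {a<..<b} \<Longrightarrow> 0 \<le> g' u"
    and large: "\<And>u. u \<in> {a<..<b} \<Longrightarrow> \<delta> \<le> \<bar>g u\<bar>"
  shows "cmod (integral {a..b} (\<lambda>u. cis (\<phi> u))) \<le> 2 / \<delta>"
proof (rule field_le_epsilon)
  fix e :: real
  assume "0 < e"
  show "cmod (integral {a..b} (\<lambda>u. cis (\<phi> u))) \<le> 2 / \<delta> + e"
  proof (cases "a < b")
    case False
    then show ?thesis
      using \<open>0 < \<delta>\<close> \<open>0 < e\<close> by (cases "a = b") auto
  next
    case True
    define \<epsilon> where "\<epsilon> = min (e / 2) ((b - a) / 2)"
    have \<epsilon>: "0 < \<epsilon>" "2 * \<epsilon> \<le> e" "a + \<epsilon> \<le> b - \<epsilon>"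
      using True \<open>0 < e\<close> by (auto simp: \<epsilon>_def min_def field_simps)
    have integrable_sub: "(\<lambda>u. cis (\<phi> u)) integrable_on {c..d}" if "a \<le> c" "d \<le> b" for c d
      using integrable_subinterval_real[OF integrable] that by simp
    have "cmod (integral {a..a + \<epsilon>} (\<lambda>u. cis (\<phi> u))) \<le> (a + \<epsilon>) - a"
      using \<epsilon> by (intro norm_integral_cis_le_length integrable_sub) auto
    moreover have "cmod (integral {b - \<epsilon>..b} (\<lambda>u. cis (\<phi> u))) \<le> b - (b - \<epsilon>)"
      using \<epsilon> by (intro norm_integral_cis_le_length integrable_sub) auto
    moreover have "cmod (integral {a + \<epsilon>..b - \<epsilon>} (\<lambda>u. cis (\<phi> u))) \<le> 2 / \<delta>"
    proof (rule van_der_Corput_Icc[OF \<open>a + \<epsilon> \<le> b - \<epsilon>\<close> \<open>0 < \<delta>\<close>])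
      fix u
      assume "u \<in> {a + \<epsilon>..b - \<epsilon>}"
      then have u: "u \<in> {a<..<b}"
        using \<epsilon> by auto
      show "(\<phi> has_real_derivative g u) (at u within {a + \<epsilon>..b - \<epsilon>})"
        using \<phi>[OF u] by (rule has_field_derivative_at_within)
      show "(g has_real_derivative g' u) (at u within {a + \<epsilon>..b - \<epsilon>})"
        using g[OF u] by (rule has_field_derivative_at_within)
      show "0 \<le> g' u" "\<delta> \<le> \<bar>g u\<bar>"
        using convex[OF u] large[OF u] by auto
    qed
    moreover have "integral {a..b} (\<lambda>u. cis (\<phi> u)) = integral {a..a + \<epsilon>} (\<lambda>u. cis (\<phi> u))
        + integral {a + \<epsilon>..b - \<epsilon>} (\<lambda>u. cis (\<phi> u)) + integral {b - \<epsilon>..b} (\<lambda>u. cis (\<phi> u))"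
      using \<epsilon> by (intro integral_split_three integrable) auto
    ultimately show ?thesis
      using \<epsilon> norm_triangle_ineq by (smt (verit))
  qed
qed

definition h_deriv :: "real \<Rightarrow> real \<Rightarrow> real \<Rightarrow> real" where
  "h_deriv y z u = y - z + 2 * ln u - 2 * ln (1 - u)"

lemma h_fun_has_real_derivative:
  assumes "0 < u" "u < 1"
  shows "(h_fun y z has_real_derivative h_deriv y z u) (at u)"
proof -
  have "2 + 2 * u / (1 - u) = 2 / (1 - u)"
    using assms by (simp add: field_simps)
  with assms show ?thesis
    unfolding h_fun_def h_deriv_def by (auto intro!: derivative_eq_intros simp: algebra_simps)
qed

lemma h_deriv_has_real_derivative:
  assumes "0 < u" "u < 1"
  shows "(h_deriv y z has_real_derivative 2 / u + 2 / (1 - u)) (at u)"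
  using assms unfolding h_deriv_def by (auto intro!: derivative_eq_intros)

lemma h_deriv_logistic: "h_deriv y z (1 / (1 + exp (- w))) = y - z + 2 * w"
proof -
  have pos: "0 < 1 + exp (- w)"
    by (simp add: add_pos_pos)
  then have "1 - 1 / (1 + exp (- w)) = exp (- w) / (1 + exp (- w))"
    by (simp add: field_simps)
  with pos show ?thesis
    by (simp add: h_deriv_def ln_div)
qed

lemma h_deriv_increment_ge:
  assumes "0 < u" "u \<le> v" "v < 1"
  shows "8 * (v - u) \<le> h_deriv y z v - h_deriv y z u"
proof (cases "u = v")
  case False
  have "\<exists>\<xi>. u < \<xi> \<and> \<xi> < v \<and>
      h_deriv y z v - h_deriv y z u = (v - u) * (2 / \<xi> + 2 / (1 - \<xi>))"
  proof (rule MVT2)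
    show "u < v"
      using False assms by simp
    show "(h_deriv y z has_real_derivative 2 / x + 2 / (1 - x)) (at x)" if "u \<le> x" "x \<le> v" for x
      using that assms by (intro h_deriv_has_real_derivative) auto
  qed
  then obtain \<xi> where \<xi>: "u < \<xi>" "\<xi> < v" and
      increment: "h_deriv y z v - h_deriv y z u = (v - u) * (2 / \<xi> + 2 / (1 - \<xi>))"
    by blast
  have "\<xi> * (1 - \<xi>) \<le> 1 / 4"
    using zero_le_power2[of "2 * \<xi> - 1"] by (simp add: power2_eq_square algebra_simps)
  then have "2 / (1 / 4) \<le> 2 / (\<xi> * (1 - \<xi>))"
    using \<xi> assms by (intro frac_le) auto
  also have "2 / (\<xi> * (1 - \<xi>)) = 2 / \<xi> + 2 / (1 - \<xi>)"
    using \<xi> assms by (simp add: field_simps)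
  finally have "8 \<le> 2 / \<xi> + 2 / (1 - \<xi>)"
    by simp
  then have "(v - u) * 8 \<le> (v - u) * (2 / \<xi> + 2 / (1 - \<xi>))"
    using assms by (intro mult_left_mono) auto
  then show ?thesis
    unfolding increment by linarith
qed simp

lemma h_deriv_level_points:
  assumes "0 \<le> c"
  obtains a b where "0 < a" "a \<le> b" "b < 1" "h_deriv y z a = - c" "h_deriv y z b = c"
proof
  define w where "w = (z - y) / 2"
  show "h_deriv y z (1 / (1 + exp (- (w - c / 2)))) = - c"
    "h_deriv y z (1 / (1 + exp (- (w + c / 2)))) = c"
    unfolding h_deriv_logistic w_def by (simp_all add: field_simps)
  show "1 / (1 + exp (- (w - c / 2))) \<le> 1 / (1 + exp (- (w + c / 2)))"
    using assms by (intro frac_le add_pos_pos) auto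
qed (simp_all add: add_pos_pos)

lemma integral_unif01_eq_integral:
  fixes f :: "real \<Rightarrow> 'a::euclidean_space"
  assumes [measurable]: "f \<in> borel_measurable borel" and bounded: "\<And>u. norm (f u) \<le> B"
  shows "f integrable_on {0..1}" and "(\<integral>u. f u \<partial>unif01) = integral {0..1} f"
proof -
  have unif01_density: "unif01 = density lborel (\<lambda>u. ennreal (indicator {0<..<1} u))"
    unfolding unif01_def uniform_measure_def
    by (intro density_cong) (auto split: split_indicator)
  have unif01_eq: "(\<integral>u. f u \<partial>unif01) = (LINT u:{0<..<1}|lborel. f u)"
    unfolding unif01_density by (subst integral_density) (auto simp: set_lebesgue_integral_def)
  have "set_integrable lborel {0<..<1} f"
    unfolding set_integrable_def
  proof (rule Bochner_Integration.integrable_bound)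
    show "integrable lborel (\<lambda>u. B * indicator {0<..<1::real} u)"
      by (simp add: integrable_indicator_iff)
    show "AE u in lborel. norm (indicator {0<..<1} u *\<^sub>R f u) \<le> norm (B * indicator {0<..<1::real} u)"
      using bounded[THEN order_trans[OF _ abs_ge_self]] by (auto split: split_indicator)
  qed measurable
  from set_borel_integral_eq_integral[OF this] unif01_eq
  show "f integrable_on {0..1}" and "(\<integral>u. f u \<partial>unif01) = integral {0..1} f"
    by (simp_all add: integrable_on_open_interval_real flip: integral_open_interval_real)
qed

lemma cis_h_fun_measurable: "(\<lambda>u. cis (t * h_fun y z u)) \<in> borel_measurable borel"
proof -
  have "cis \<in> borel_measurable borel"
    by (intro borel_measurable_continuous_onI continuous_intros)
  moreover have "(\<lambda>u. t * h_fun y z u) \<in> borel_measurable borel"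
    unfolding h_fun_def by measurable
  ultimately show ?thesis
    by (rule measurable_compose[rotated])
qed

lemma integrable_cis_h_fun:
  assumes "0 \<le> c" "d \<le> 1"
  shows "(\<lambda>u. cis (t * h_fun y z u)) integrable_on {c..d}"
proof -
  have "(\<lambda>u. cis (t * h_fun y z u)) integrable_on {0..1}"
    by (rule integral_unif01_eq_integral(1)[OF cis_h_fun_measurable, where B = 1]) simp
  then show ?thesis
    by (rule integrable_subinterval_real) (use assms in auto)
qed

lemma van_der_Corput_h_fun:
  assumes "0 < s" "0 < \<delta>" "0 \<le> c" "d \<le> 1"
    and steep: "\<And>u. u \<in> {c<..<d} \<Longrightarrow> \<delta> \<le> \<bar>s * h_deriv y z u\<bar>"
  shows "cmod (integral {c..d} (\<lambda>u. cis (s * h_fun y z u))) \<le> 2 / \<delta>"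
proof (rule van_der_Corput[where g = "\<lambda>u. s * h_deriv y z u"])
  show "(\<lambda>u. cis (s * h_fun y z u)) integrable_on {c..d}"
    using assms by (rule_tac integrable_cis_h_fun) auto
  fix u
  assume "u \<in> {c<..<d}"
  then have "0 < u" "u < 1"
    using assms by auto
  then show "((\<lambda>u. s * h_fun y z u) has_real_derivative s * h_deriv y z u) (at u)"
    "((\<lambda>u. s * h_deriv y z u) has_real_derivative s * (2 / u + 2 / (1 - u))) (at u)"
    "0 \<le> s * (2 / u + 2 / (1 - u))"
    using \<open>0 < s\<close> by (simp_all add: DERIV_cmult h_fun_has_real_derivative h_deriv_has_real_derivative)
qed (use assms in auto)

lemma norm_integral_cis_h_fun_le:
  assumes "0 < s"
  shows "cmod (integral {0..1} (\<lambda>u. cis (s * h_fun y z u))) \<le> 2 / sqrt s"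
proof -
  define \<delta> where "\<delta> = 4 * sqrt s"
  have "0 < \<delta>"
    using assms by (simp add: \<delta>_def)
  then have "0 \<le> \<delta> / s"
    using assms by simp
  then obtain a b where ab: "0 < a" "a \<le> b" "b < 1"
    and a: "h_deriv y z a = - (\<delta> / s)" and b: "h_deriv y z b = \<delta> / s"
    by (rule h_deriv_level_points)
  have "\<delta> / s = 4 / sqrt s"
    using assms by (simp add: \<delta>_def divide_simps real_sqrt_mult_self)
  then have length: "b - a \<le> 1 / sqrt s"
    using h_deriv_increment_ge[OF ab, of y z] a b by simp
  have mono: "s * h_deriv y z u \<le> s * h_deriv y z v" if "0 < u" "u \<le> v" "v < 1" for u v
    using h_deriv_increment_ge[OF that, of y z] that assms by simp
  have left: "cmod (integral {0..a} (\<lambda>u. cis (s * h_fun y z u))) \<le> 2 / \<delta>"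
  proof (rule van_der_Corput_h_fun)
    fix u
    assume "u \<in> {0<..<a}"
    then have "s * h_deriv y z u \<le> - \<delta>"
      using mono[of u a] ab a assms by auto
    then show "\<delta> \<le> \<bar>s * h_deriv y z u\<bar>"
      by simp
  qed (use assms \<open>0 < \<delta>\<close> ab in auto)
  have right: "cmod (integral {b..1} (\<lambda>u. cis (s * h_fun y z u))) \<le> 2 / \<delta>"
  proof (rule van_der_Corput_h_fun)
    fix u
    assume "u \<in> {b<..<1}"
    then have "\<delta> \<le> s * h_deriv y z u"
      using mono[of b u] ab b assms by auto
    then show "\<delta> \<le> \<bar>s * h_deriv y z u\<bar>"
      by simp
  qed (use assms \<open>0 < \<delta>\<close> ab in auto)
  have middle: "cmod (integral {a..b} (\<lambda>u. cis (s * h_fun y z u))) \<le> b - a"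
    using ab by (intro norm_integral_cis_le_length integrable_cis_h_fun) auto
  have "integral {0..1} (\<lambda>u. cis (s * h_fun y z u)) =
      integral {0..a} (\<lambda>u. cis (s * h_fun y z u)) + integral {a..b} (\<lambda>u. cis (s * h_fun y z u))
      + integral {b..1} (\<lambda>u. cis (s * h_fun y z u))"
    using ab by (intro integral_split_three integrable_cis_h_fun) auto
  then have "cmod (integral {0..1} (\<lambda>u. cis (s * h_fun y z u))) \<le> 2 / \<delta> + (b - a) + 2 / \<delta>"
    using left middle right by (smt (verit) norm_triangle_ineq)
  also have "\<dots> \<le> 2 / sqrt s"
    using length by (simp add: \<delta>_def field_simps)
  finally show ?thesis .
qed

theorem lemma2p3:
  fixes y z t :: real
  assumes "t \<noteq> 0"
  shows "cmod (\<integral>u. cis (t * h_fun y z u) \<partial>unif01) \<le> 2 * \<bar>t\<bar> powr (-1/2)"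
proof -
  have "cmod (integral {0..1} (\<lambda>u. cis (t * h_fun y z u))) \<le> 2 / sqrt \<bar>t\<bar>"
  proof (cases "0 < t")
    case True
    then show ?thesis
      using norm_integral_cis_h_fun_le[of t] by simp
  next
    case False
    then have "0 < - t"
      using assms by simp
    have "integral {0..1} (\<lambda>u. cis (t * h_fun y z u))
        = cnj (integral {0..1} (\<lambda>u. cis (- t * h_fun y z u)))"
      by (simp add: integral_cnj cis_cnj)
    then show ?thesis
      using norm_integral_cis_h_fun_le[OF \<open>0 < - t\<close>] False by simp
  qed
  moreover have "\<bar>t\<bar> powr (-1/2) = 1 / sqrt \<bar>t\<bar>"
    using powr_minus_divide[of "\<bar>t\<bar>" "1/2"] by (simp add: powr_half_sqrt)
  ultimately show ?thesis
    using integral_unif01_eq_integral(2)[OF cis_h_fun_measurable, where B = 1] by simp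
qed

end
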